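(* For all $a,b\in\mathbb{R}$, the matrix $$M_{10}^{(2)}(a,b)=\begin{bmatrix} 1 & 1 & 1 & 1 & 1 & 1 & 1 & 1 & 1 & 1 \\ 1 & \mathrm{i} & \mathrm{i} e^{\mathrm{i} b} & e^{\mathrm{i} b} & -\mathrm{i} & -e^{\mathrm{i} b} & e^{\mathrm{i} b} & -\mathrm{i} e^{\mathrm{i} b} & -e^{\mathrm{i} b} & -1 \\ 1 & -1 & -\mathrm{i} e^{\mathrm{i} b} & -e^{\mathrm{i} a} & e^{\mathrm{i} a} & \mathrm{i} e^{\mathrm{i} b} & -\mathrm{i} e^{\mathrm{i} a} & e^{\mathrm{i} a} & -e^{\mathrm{i} a} & \mathrm{i} e^{\mathrm{i} a} \\ 1 & \mathrm{i} & -\mathrm{i} & -\mathrm{i} e^{\mathrm{i} a} & \mathrm{i} & -\mathrm{i} & \mathrm{i} e^{\mathrm{i} a} & -1 & -1 & 1 \\ 1 & 1 & \mathrm{i} & -1 & \mathrm{i} & \mathrm{i} & -1 & -\mathrm{i} & -\mathrm{i} & -\mathrm{i} \\ 1 & -\mathrm{i} & -1 & e^{\mathrm{i} a} & 1 & -1 & -e^{\mathrm{i} a} & -1 & 1 & \mathrm{i} \\ 1 & \mathrm{i} & e^{\mathrm{i} b} & -e^{\mathrm{i} b} & -\mathrm{i} & -\mathrm{i} e^{\mathrm{i} b} & -e^{\mathrm{i} b} & \mathrm{i} e^{\mathrm{i} b} & e^{\mathrm{i} b} & -1 \\ 1 & -1 & -\mathrm{i} e^{\mathrm{i} b} & \mathrm{i}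 e^{\mathrm{i} a} & -e^{\mathrm{i} a} & \mathrm{i} e^{\mathrm{i} b} & e^{\mathrm{i} a} & -e^{\mathrm{i} a} & e^{\mathrm{i} a} & -\mathrm{i} e^{\mathrm{i} a} \\ 1 & -\mathrm{i} & \mathrm{i} e^{\mathrm{i} b} & \mathrm{i} e^{\mathrm{i} a} & -1 & -\mathrm{i} e^{\mathrm{i} b} & -\mathrm{i} e^{\mathrm{i} a} & \mathrm{i} & -1 & 1 \\ 1 & -\mathrm{i} & -e^{\mathrm{i} b} & -\mathrm{i} e^{\mathrm{i} a} & -1 & e^{\mathrm{i} b} & \mathrm{i} e^{\mathrm{i} a} & 1 & \mathrm{i} & -1 \end{bmatrix}$$ is a dephased complex Hadamard matrix, i.e. $M_{10}^{(2)}(a,b)\,M_{10}^{(2)}(a,b)^*=10\,I_{10}$.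
   Context: $^*$ denotes conjugate transpose; a dephased complex Hadamard matrix of order $d$ is a $d\times d$ matrix with unimodular entries, first row and first column all equal to $1$, and $HH^*=dI_d$. *)

theory Defs
  imports Complex_Main
begin

text \<open>A d x d complex matrix is represented as a function H :: nat => nat => complex,
  where H i j is the entry in row i, column j (0-based, i, j < d).\<close>

definition dephased_complex_hadamard :: "nat \<Rightarrow> (nat \<Rightarrow> nat \<Rightarrow> complex) \<Rightarrow> bool" where
  "dephased_complex_hadamard d H \<longleftrightarrow>
     (\<forall>i<d. \<forall>j<d. cmod (H i j) = 1) \<and>
     (\<forall>j<d. H 0 j = 1) \<and>
     (\<forall>i<d. H i 0 = 1) \<and>
     (\<forall>i<d. \<forall>k<d. (\<Sum>j<d. H i j * cnj (H k j)) = (if i = k then of_nat d else 0))"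

definition M10_2_rows :: "real \<Rightarrow> real \<Rightarrow> complex list list" where
  "M10_2_rows a b = (let i = \<i>; A = exp (\<i> * of_real a); B = exp (\<i> * of_real b) in
   [[1, 1, 1, 1, 1, 1, 1, 1, 1, 1],
    [1, i, i*B, B, -i, -B, B, -i*B, -B, -1],
    [1, -1, -i*B, -A, A, i*B, -i*A, A, -A, i*A],
    [1, i, -i, -i*A, i, -i, i*A, -1, -1, 1],
    [1, 1, i, -1, i, i, -1, -i, -i, -i],
    [1, -i, -1, A, 1, -1, -A, -1, 1, i],
    [1, i, B, -B, -i, -i*B, -B, i*B, B, -1],
    [1, -1, -i*B, i*A, -A, i*B, A, -A, A, -i*A],
    [1, -i, i*B, i*A, -1, -i*B, -i*A, i, -1, 1],
    [1, -i, -B, -i*A, -1, B, i*A, 1, i, -1]])"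

definition M10_2 :: "real \<Rightarrow> real \<Rightarrow> nat \<Rightarrow> nat \<Rightarrow> complex" where
  "M10_2 a b r c = M10_2_rows a b ! r ! c"

end

theory Submission
  imports Defs
begin

text \<open>Every entry of the matrix is a fourth root of unity times 1, \<open>A = e\<^sup>i\<^sup>a\<close> or \<open>B = e\<^sup>i\<^sup>b\<close>.
  Hence each inner product of two rows is a polynomial in \<open>A, cnj A, B, cnj B\<close>, and it
  vanishes as soon as \<open>cnj A\<close> and \<open>cnj B\<close> are the inverses of \<open>A\<close> and \<open>B\<close>: the 90
  orthogonality relations are identities in the ring \<open>\<int>[\<i>, A, A\<inverse>, B, B\<inverse>]\<close>.\<close>

definition M10_2_entries :: "complex \<Rightarrow> complex \<Rightarrow> complex list list" where
  "M10_2_entries A B =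
   [[1, 1, 1, 1, 1, 1, 1, 1, 1, 1],
    [1, \<i>, \<i>*B, B, -\<i>, -B, B, -\<i>*B, -B, -1],
    [1, -1, -\<i>*B, -A, A, \<i>*B, -\<i>*A, A, -A, \<i>*A],
    [1, \<i>, -\<i>, -\<i>*A, \<i>, -\<i>, \<i>*A, -1, -1, 1],
    [1, 1, \<i>, -1, \<i>, \<i>, -1, -\<i>, -\<i>, -\<i>],
    [1, -\<i>, -1, A, 1, -1, -A, -1, 1, \<i>],
    [1, \<i>, B, -B, -\<i>, -\<i>*B, -B, \<i>*B, B, -1],
    [1, -1, -\<i>*B, \<i>*A, -A, \<i>*B, A, -A, A, -\<i>*A],
    [1, -\<i>, \<i>*B, \<i>*A, -1, -\<i>*B, -\<i>*A, \<i>, -1, 1],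
    [1, -\<i>, -B, -\<i>*A, -1, B, \<i>*A, 1, \<i>, -1]]"

lemma M10_2_eq_entries:
  "M10_2 a b = (\<lambda>r c. M10_2_entries (exp (\<i> * of_real a)) (exp (\<i> * of_real b)) ! r ! c)"
  unfolding M10_2_def M10_2_rows_def M10_2_entries_def Let_def ..

lemma sum_lessThan_10:
  fixes f :: "nat \<Rightarrow> 'a::comm_monoid_add"
  shows "(\<Sum>j<10. f j) = f 0 + f 1 + f 2 + f 3 + f 4 + f 5 + f 6 + f 7 + f 8 + f 9"
  by (simp add: numeral_eq_Suc lessThan_Suc add_ac)

lemma mult_cnj_eq_1_iff_cmod: "z * cnj z = 1 \<longleftrightarrow> cmod z = 1"
proof -
  have "z * cnj z = 1 \<longleftrightarrow> (cmod z)\<^sup>2 = 1"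
    by (metis complex_norm_square of_real_eq_1_iff of_real_power)
  also have "\<dots> \<longleftrightarrow> cmod z = 1"
    by (simp add: abs_square_eq_1)
  finally show ?thesis .
qed

lemma M10_2_entries_unimodular:
  assumes "cmod A = 1" and "cmod B = 1"
  shows "\<forall>i<10. \<forall>j<10. cmod (M10_2_entries A B ! i ! j) = 1"
  by (simp add: numeral_eq_Suc All_less_Suc M10_2_entries_def norm_mult assms)

lemma M10_2_entries_first_row_col:
  shows "\<forall>j<10. M10_2_entries A B ! 0 ! j = 1" and "\<forall>i<10. M10_2_entries A B ! i ! 0 = 1"
  by (simp_all add: numeral_eq_Suc All_less_Suc M10_2_entries_def)

lemma M10_2_entries_orthogonal:
  assumes A: "A * cnj A = 1" and B: "B * cnj B = 1"
  shows "\<forall>i<10. \<forall>k<10. (\<Sum>j<10. M10_2_entries A B ! i ! j * cnj (M10_2_entries A B ! k ! j))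
                         = (if i = k then of_nat 10 else 0)"
  unfolding sum_lessThan_10
  by (simp add: numeral_eq_Suc All_less_Suc M10_2_entries_def algebra_simps A B)

lemma dephased_complex_hadamard_M10_2_entries:
  assumes "cmod A = 1" and "cmod B = 1"
  shows "dephased_complex_hadamard 10 (\<lambda>r c. M10_2_entries A B ! r ! c)"
  using M10_2_entries_unimodular[OF assms] M10_2_entries_first_row_col
    M10_2_entries_orthogonal[of A B] assms
  unfolding dephased_complex_hadamard_def mult_cnj_eq_1_iff_cmod by blast

theorem mainTheorem4:
  fixes a b :: real
  shows "dephased_complex_hadamard 10 (M10_2 a b)"
  unfolding M10_2_eq_entries
  by (rule dephased_complex_hadamard_M10_2_entries) simp_all

end
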